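(* Let $G=(V,E)$ be a weighted undirected graph with $n$ labeled vertices and let $k\ge1$. The running time of Algorithm 2 (described in the context), with priority queues implemented as Fibonacci heaps, is $O(k|E|+k|V|\log|V|)$.
   Context: Fibonacci heap: insert and decrease-key cost $O(1)$ amortized, pop-minimum costs $O(\log$ size$)$. Algorithm 2: input an undirected graph $G=(V,E,w)$ with non-negative weights, labeled set $\mathcal L\subseteq V$, and $k$. It keeps a global min-priority queue $Q$ of vertices and, for each $v\in V$, a local min-priority queue $Q_v$ of seeds, a list kNN$[v]$ (initially empty) and a set $S_v$ (initially empty). Initially for each $v\in\mathcal L$: insert $v$ into $Q$ with priority $0$ and $v$ into $Q_v$ with priority $0$. While $Q$ is nonempty: pop the minimum $(v_0,\mathrm{dist})$ from $Q$; pop the minimum $(\mathrm{seed},\mathrm{dist})$ from $Q_{v_0}$; add $\mathrm{seed}$ to $S_{v_0}$; append $(\mathrm{seed},\mathrm{dist})$ to kNN$[v_0]$; if kNN$[v_0]$ has fewer than $k$ entries and $Q_{v_0}$ is nonempty, insert $v_0$ into $Q$ with priority equal to the current minimum priority of $Q_{v_0}$; then for every neighbour $v$ of $v_0$ with fewer than $k$ entries in kNN$[v]$ and $\mathrm{seed}\notin S_v$, perform decrease-or-insert of $\mathrm{seed}$ in $Q_v$ and of $v$ in $Q$, both with priority $\mathrm{dist}+w(v_0,v)$ (lower the priority if present, otherwise insert). *)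

theory Defs
  imports Main "HOL.Transcendental"
begin

text \<open>Cost model and state-transition semantics of Algorithm 2.
  Vertices are natural numbers; an undirected graph is a set E of two-element
  vertex sets; w assigns a weight to each edge.  Priority queues are modelled
  as partial maps (element to priority).  Costs are charged as for Fibonacci
  heaps (amortized): insert / decrease-key cost 1, pop-minimum costs
  1 + log2(size); every other elementary operation costs 1.\<close>

record alg_state =
  gQ   :: "nat \<Rightarrow> real option"
  lQ   :: "nat \<Rightarrow> nat \<Rightarrow> real option"
  kNN  :: "nat \<Rightarrow> (nat \<times> real) list"
  seen :: "nat \<Rightarrow> nat set"

definition pop_cost :: "nat \<Rightarrow> real" where
  "pop_cost s = 1 + log 2 (max 1 (real s))"

definition nbrs :: "nat set set \<Rightarrow> nat \<Rightarrow> nat set" where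
  "nbrs E v0 = {v. {v0, v} \<in> E}"

definition is_min_entry :: "('a \<Rightarrow> real option) \<Rightarrow> 'a \<Rightarrow> real \<Rightarrow> bool" where
  "is_min_entry m x d \<longleftrightarrow> m x = Some d \<and> (\<forall>y q. m y = Some q \<longrightarrow> d \<le> q)"

definition dec_or_ins :: "real option \<Rightarrow> real \<Rightarrow> real option" where
  "dec_or_ins old p = Some (case old of None \<Rightarrow> p | Some q \<Rightarrow> min q p)"

definition alg_init :: "nat set \<Rightarrow> alg_state" where
  "alg_init L = \<lparr> gQ = (\<lambda>v. if v \<in> L then Some 0 else None),
                  lQ = (\<lambda>v. if v \<in> L then [v \<mapsto> 0] else Map.empty),
                  kNN = (\<lambda>_. []),
                  seen = (\<lambda>_. {}) \<rparr>"

text \<open>Cost of the initialisation: create per-vertex structures and insert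
  every labeled vertex into Q and into its own local queue.\<close>
definition init_cost :: "nat set \<Rightarrow> nat set \<Rightarrow> real" where
  "init_cost V L = real (card V) + 2 * real (card L)"

text \<open>Ties in pop-minimum are resolved arbitrarily.\<close>
definition alg_step ::
  "nat set set \<Rightarrow> (nat set \<Rightarrow> real) \<Rightarrow> nat \<Rightarrow> alg_state \<Rightarrow> real \<Rightarrow> alg_state \<Rightarrow> bool" where
  "alg_step E w k st c st' \<longleftrightarrow>
    (\<exists>v0 d seed d'.
       is_min_entry (gQ st) v0 d \<and>
       is_min_entry (lQ st v0) seed d' \<and>
       (let Q1 = (gQ st)(v0 := None);
            Qv1 = (lQ st)(v0 := (lQ st v0)(seed := None));
            S1 = (seen st)(v0 := insert seed (seen st v0));
            K1 = (kNN st)(v0 := kNN st v0 @ [(seed, d')]);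
            Q2 = (if length (K1 v0) < k \<and> Qv1 v0 \<noteq> Map.empty
                  then Q1(v0 := Some (Min (ran (Qv1 v0)))) else Q1);
            upd = (\<lambda>v. v \<in> nbrs E v0 \<and> length (K1 v) < k \<and> seed \<notin> S1 v)
        in st' = \<lparr> gQ = (\<lambda>v. if upd v then dec_or_ins (Q2 v) (d' + w {v0, v}) else Q2 v),
                   lQ = (\<lambda>v. if upd v
                              then (Qv1 v)(seed := dec_or_ins (Qv1 v seed) (d' + w {v0, v}))
                              else Qv1 v),
                   kNN = K1,
                   seen = S1 \<rparr>
           \<and> c = pop_cost (card (dom (gQ st))) + pop_cost (card (dom (lQ st v0)))
                 + 1 + real (card (nbrs E v0))))"

text \<open>Finite executions (any prefix of a run) with accumulated cost.\<close>
inductive alg_run ::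
  "nat set set \<Rightarrow> (nat set \<Rightarrow> real) \<Rightarrow> nat \<Rightarrow> alg_state \<Rightarrow> real \<Rightarrow> alg_state \<Rightarrow> bool"
  for E w k where
  run_nil: "alg_run E w k s 0 s"
| run_step: "alg_step E w k s c s' \<Longrightarrow> alg_run E w k s' c' s'' \<Longrightarrow> alg_run E w k s (c + c') s''"

end

theory Submission imports Defs begin

text \<open>Amortised analysis with the potential
  Phi = sum over v in V of (k - |kNN[v]|) * (A + deg v), where A bounds the cost of the two
  pops.  Every iteration appends one entry to kNN[v0], and only vertices with fewer than k
  entries are ever in Q, so Phi drops by A + deg v0, which pays for the iteration.  All queues
  hold at most |V| entries, so A = O(log |V|), and by the handshake lemma the initial potential
  is k |V| A + 2 k |E| = O(k |E| + k |V| log |V|).\<close>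

lemma card_nbrs_le_card_incident:
  assumes "finite E"
  shows "card (nbrs E v) \<le> card {e\<in>E. v \<in> e}"
proof -
  have "inj_on (\<lambda>u. {v, u}) (nbrs E v)" by (auto simp: inj_on_def doubleton_eq_iff)
  moreover have "(\<lambda>u. {v, u}) ` nbrs E v \<subseteq> {e\<in>E. v \<in> e}" by (auto simp: nbrs_def)
  ultimately show ?thesis using card_inj_on_le assms by fastforce
qed

lemma sum_card_nbrs_le:
  assumes "finite V" and edges: "\<forall>e\<in>E. e \<subseteq> V \<and> card e = 2"
  shows "(\<Sum>v\<in>V. card (nbrs E v)) \<le> 2 * card E"
proof -
  have fin_E: "finite E"
    using assms by (meson finite_Pow_iff finite_subset Pow_iff subsetI)
  have "(\<Sum>v\<in>V. card (nbrs E v)) \<le> (\<Sum>v\<in>V. card {e\<in>E. v \<in> e})"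
    by (rule sum_mono) (rule card_nbrs_le_card_incident[OF fin_E])
  also have "\<dots> = (\<Sum>v\<in>V. \<Sum>e\<in>E. if v \<in> e then 1 else 0)"
    by (rule sum.cong) (auto simp: sum.If_cases fin_E Int_def)
  also have "\<dots> = (\<Sum>e\<in>E. \<Sum>v\<in>V. if v \<in> e then 1 else 0)" by (rule sum.swap)
  also have "\<dots> = (\<Sum>e\<in>E. card e)"
  proof (rule sum.cong)
    fix e assume "e \<in> E"
    then have "V \<inter> e = e" using edges by auto
    then show "(\<Sum>v\<in>V. if v \<in> e then 1 else 0) = card e"
      using assms(1) by (simp add: sum.If_cases)
  qed simp
  also have "\<dots> = 2 * card E" using edges by simp
  finally show ?thesis .
qed

lemma pop_cost_mono: "s \<le> n \<Longrightarrow> pop_cost s \<le> pop_cost n"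
  unfolding pop_cost_def by (simp add: log_le_cancel_iff)

lemma pop_cost_le_max_log: "pop_cost n \<le> 2 * max 1 (log 2 (real n))"
proof (cases "n = 0")
  case False
  then have "max 1 (real n) = real n" by simp
  then show ?thesis unfolding pop_cost_def by simp
qed (simp add: pop_cost_def)

definition queues_bounded :: "nat set \<Rightarrow> nat \<Rightarrow> alg_state \<Rightarrow> bool" where
  "queues_bounded V k st \<longleftrightarrow>
     (\<forall>v. gQ st v \<noteq> None \<longrightarrow> v \<in> V \<and> length (kNN st v) < k) \<and> (\<forall>v. dom (lQ st v) \<subseteq> V)"

definition potential :: "nat set \<Rightarrow> nat set set \<Rightarrow> nat \<Rightarrow> real \<Rightarrow> alg_state \<Rightarrow> real" where
  "potential V E k A st = (\<Sum>v\<in>V. real (k - length (kNN st v)) * (A + real (card (nbrs E v))))"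

lemma potential_nonneg: "A \<ge> 0 \<Longrightarrow> potential V E k A st \<ge> 0"
  unfolding potential_def by (intro sum_nonneg) simp

lemma queues_bounded_alg_init: "L \<subseteq> V \<Longrightarrow> k \<ge> 1 \<Longrightarrow> queues_bounded V k (alg_init L)"
  unfolding queues_bounded_def alg_init_def by auto

lemma potential_alg_init:
  assumes "finite V" "\<forall>e\<in>E. e \<subseteq> V \<and> card e = 2"
  shows "potential V E k A (alg_init L) \<le> real k * A * real (card V) + 2 * (real k * real (card E))"
proof -
  have "potential V E k A (alg_init L) = (\<Sum>v\<in>V. real k * A + real k * real (card (nbrs E v)))"
    unfolding potential_def alg_init_def by (simp add: algebra_simps)
  also have "\<dots> = real k * A * real (card V) + real k * real (\<Sum>v\<in>V. card (nbrs E v))"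
    by (simp add: sum.distrib sum_distrib_left)
  also have "\<dots> \<le> real k * A * real (card V) + real k * real (2 * card E)"
    using sum_card_nbrs_le[OF assms]
    by (intro add_left_mono mult_left_mono) (simp_all only: of_nat_le_iff of_nat_0_le_iff)
  finally show ?thesis by simp
qed

lemma alg_step_cases:
  assumes "alg_step E w k st c st'"
  obtains v0 d seed d' where
    "gQ st v0 = Some d" and "lQ st v0 seed = Some d'"
    and "kNN st' = (kNN st)(v0 := kNN st v0 @ [(seed, d')])"
    and "c = pop_cost (card (dom (gQ st))) + pop_cost (card (dom (lQ st v0)))
             + 1 + real (card (nbrs E v0))"
    and "\<And>v. gQ st' v \<noteq> None \<Longrightarrow>
           (v \<in> nbrs E v0 \<and> length (kNN st' v) < k) \<or> (v = v0 \<and> length (kNN st' v0) < k)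
           \<or> (v \<noteq> v0 \<and> gQ st v \<noteq> None)"
    and "\<And>v. dom (lQ st' v) \<subseteq> dom (lQ st v) \<union> {seed}"
  using assms unfolding alg_step_def Let_def is_min_entry_def
  apply (elim exE conjE)
  subgoal for v0 d seed d'
    by (rule that[of v0 d seed d']) (auto simp: dec_or_ins_def split: if_splits)
  done

lemma alg_step_queues_bounded:
  assumes edges: "\<forall>e\<in>E. e \<subseteq> V \<and> card e = 2"
    and bounded: "queues_bounded V k st" and step: "alg_step E w k st c st'"
  shows "queues_bounded V k st'"
proof -
  obtain v0 d seed d' where popped_v0: "gQ st v0 = Some d"
    and popped_seed: "lQ st v0 seed = Some d'"
    and kNN': "kNN st' = (kNN st)(v0 := kNN st v0 @ [(seed, d')])"
    and gQ': "\<And>v. gQ st' v \<noteq> None \<Longrightarrow>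
           (v \<in> nbrs E v0 \<and> length (kNN st' v) < k) \<or> (v = v0 \<and> length (kNN st' v0) < k)
           \<or> (v \<noteq> v0 \<and> gQ st v \<noteq> None)"
    and lQ': "\<And>v. dom (lQ st' v) \<subseteq> dom (lQ st v) \<union> {seed}"
    using step by (rule alg_step_cases) (rule that; assumption)
  have "v0 \<in> V" and "seed \<in> V"
    using bounded popped_v0 popped_seed unfolding queues_bounded_def by blast+
  have nbrs_in_V: "v \<in> V" if "v \<in> nbrs E v0" for v using that edges unfolding nbrs_def by blast
  show ?thesis unfolding queues_bounded_def
  proof (rule conjI; intro allI impI)
    fix v assume queued: "gQ st' v \<noteq> None"
    show "v \<in> V \<and> length (kNN st' v) < k"
    proof (cases "v = v0")
      case False
      then have "kNN st' v = kNN st v" using kNN' by simp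
      then show ?thesis
        using gQ'[OF queued] nbrs_in_V bounded False unfolding queues_bounded_def by auto
    qed (use gQ'[OF queued] \<open>v0 \<in> V\<close> nbrs_in_V in blast)
  next
    fix v show "dom (lQ st' v) \<subseteq> V"
      using lQ'[of v] bounded \<open>seed \<in> V\<close> unfolding queues_bounded_def by blast
  qed
qed

lemma alg_step_amortized:
  assumes "finite V" and bounded: "queues_bounded V k st" and step: "alg_step E w k st c st'"
    and A: "2 * pop_cost (card V) + 1 \<le> A"
  shows "c + potential V E k A st' \<le> potential V E k A st"
proof -
  obtain v0 d seed d' where popped_v0: "gQ st v0 = Some d"
    and kNN': "kNN st' = (kNN st)(v0 := kNN st v0 @ [(seed, d')])"
    and cost: "c = pop_cost (card (dom (gQ st))) + pop_cost (card (dom (lQ st v0)))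
                   + 1 + real (card (nbrs E v0))"
    using step by (rule alg_step_cases) (rule that; assumption)
  have "v0 \<in> V" and below_k: "length (kNN st v0) < k"
    using bounded popped_v0 unfolding queues_bounded_def by auto
  have "card (dom (gQ st)) \<le> card V" "card (dom (lQ st v0)) \<le> card V"
    using bounded \<open>finite V\<close> unfolding queues_bounded_def by (intro card_mono; blast)+
  then have c_le: "c \<le> A + real (card (nbrs E v0))"
    using pop_cost_mono[of "card (dom (gQ st))" "card V"]
      pop_cost_mono[of "card (dom (lQ st v0))" "card V"] cost A by linarith
  define term_of :: "alg_state \<Rightarrow> nat \<Rightarrow> real" where
    "term_of s v = real (k - length (kNN s v)) * (A + real (card (nbrs E v)))" for s v
  have split: "potential V E k A s = term_of s v0 + (\<Sum>v\<in>V-{v0}. term_of s v)" for s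
    unfolding potential_def term_of_def using \<open>finite V\<close> \<open>v0 \<in> V\<close> by (simp add: sum.remove)
  have "(\<Sum>v\<in>V-{v0}. term_of st' v) = (\<Sum>v\<in>V-{v0}. term_of st v)"
    by (rule sum.cong) (auto simp: term_of_def kNN')
  moreover have "real (k - length (kNN st' v0)) = real (k - length (kNN st v0)) - 1"
    using below_k kNN' by (simp add: of_nat_diff)
  then have "term_of st' v0 = term_of st v0 - (A + real (card (nbrs E v0)))"
    unfolding term_of_def by (simp add: left_diff_distrib)
  ultimately show ?thesis using split[of st] split[of st'] c_le by linarith
qed

lemma alg_run_amortized:
  assumes "alg_run E w k s c s'" "finite V" "\<forall>e\<in>E. e \<subseteq> V \<and> card e = 2"
    "queues_bounded V k s" "2 * pop_cost (card V) + 1 \<le> A"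
  shows "c + potential V E k A s' \<le> potential V E k A s"
  using assms
proof (induction rule: alg_run.induct)
  case (run_step s c s' c' s'')
  have "c + potential V E k A s' \<le> potential V E k A s"
    using run_step.prems run_step.hyps(1) by (blast intro: alg_step_amortized)
  moreover have "c' + potential V E k A s'' \<le> potential V E k A s'"
    using run_step alg_step_queues_bounded by blast
  ultimately show ?case by linarith
qed simp

lemma alg_run_cost_le:
  assumes fin: "finite V" and edges: "\<forall>e\<in>E. e \<subseteq> V \<and> card e = 2"
    and "L \<subseteq> V" "k \<ge> 1" and run: "alg_run E w k (alg_init L) c st"
  shows "c \<le> real k * real (card V) * (2 * pop_cost (card V) + 1) + 2 * (real k * real (card E))"
proof -
  define A where "A = 2 * pop_cost (card V) + 1"
  have "c + potential V E k A st \<le> potential V E k A (alg_init L)"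
    using queues_bounded_alg_init[OF assms(3,4)]
    by (intro alg_run_amortized[OF run fin edges]) (simp_all add: A_def)
  moreover have "potential V E k A st \<ge> 0"
    by (rule potential_nonneg) (simp add: A_def pop_cost_def)
  moreover have "potential V E k A (alg_init L) \<le> real k * A * real (card V) + 2 * (real k * real (card E))"
    by (rule potential_alg_init[OF fin edges])
  ultimately show ?thesis unfolding A_def by (simp add: algebra_simps)
qed

lemma init_cost_le:
  assumes "finite V" "L \<subseteq> V" "k \<ge> 1"
  shows "init_cost V L \<le> 3 * (real k * real (card V) * max 1 (log 2 (real (card V))))"
proof -
  have "real (card V) \<le> real k * real (card V)"
    using \<open>k \<ge> 1\<close> by (simp add: mult_le_cancel_right1)
  also have "\<dots> \<le> real k * real (card V) * max 1 (log 2 (real (card V)))"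
    using mult_left_mono[of 1 _ "real k * real (card V)"] by simp
  finally show ?thesis
    using card_mono[OF assms(1,2)] unfolding init_cost_def by linarith
qed

theorem theoremB3:
  "\<exists>C>0. \<forall>(V::nat set) (E::nat set set) (w::nat set \<Rightarrow> real) (L::nat set) (k::nat) st c.
      finite V \<and> (\<forall>e\<in>E. e \<subseteq> V \<and> card e = 2) \<and> (\<forall>e\<in>E. w e \<ge> 0) \<and>
      L \<subseteq> V \<and> k \<ge> 1 \<and> alg_run E w k (alg_init L) c st \<longrightarrow>
      init_cost V L + c \<le>
        C * (real k * real (card E) + real k * real (card V) * max 1 (log 2 (real (card V))))"
proof (intro exI[of _ 8] conjI allI impI)
  fix V E w L k st c
  assume "finite V \<and> (\<forall>e\<in>E. e \<subseteq> V \<and> card e = 2) \<and> (\<forall>e\<in>E. w e \<ge> 0) \<and>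
      L \<subseteq> V \<and> k \<ge> 1 \<and> alg_run E w k (alg_init L) c st"
  then have "finite V" "\<forall>e\<in>E. e \<subseteq> V \<and> card e = 2" "L \<subseteq> V" "k \<ge> 1"
    "alg_run E w k (alg_init L) c st" by auto
  note c_le = alg_run_cost_le[OF this] and init_le = init_cost_le[OF this(1,3,4)]
  define M where "M = max 1 (log 2 (real (card V)))"
  have "2 * pop_cost (card V) + 1 \<le> 5 * M"
    using pop_cost_le_max_log[of "card V"] unfolding M_def by simp
  then have "real k * real (card V) * (2 * pop_cost (card V) + 1) \<le> real k * real (card V) * (5 * M)"
    by (rule mult_left_mono) simp
  moreover have "0 \<le> real k * real (card E)" by simp
  ultimately show "init_cost V L + c \<le> 8 * (real k * real (card E) + real k * real (card V) * M)"
    using c_le init_le[folded M_def] unfolding distrib_left by linarith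
qed simp

end
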